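(* In the setting described in the context, for every $a>0$ the measure $\widetilde{\mu}=h^a_\sharp\mu$ is invariant and satisfies $P_\sharp\widetilde{\mu}_A=P_\sharp\mu_A$; that is, all measures $h^a_\sharp\mu$, $a>0$, yield the same normalized measure $\nu=P_\sharp\mu_A$.
   Context: Let $(\mathcal{X},\Sigma)$ be a measurable space, $\Phi^t$ ($t\in\mathbb{R}$) a flow on $\mathcal{X}$ (bijective measurable maps with $\Phi^{t_1}\circ\Phi^{t_2}=\Phi^{t_1+t_2}$, jointly measurable in $(x,t)$), $f_\sharp$ push-forward, and $\mu$ a probability measure with $\Phi^t_\sharp\mu=\mu$ for all $t$. Let $h^a$, $a>0$, be bijective measurable maps of $\mathcal{X}$ with $h^{a_1}\circ h^{a_2}=h^{a_1a_2}$ and $\Phi^t\circ h^a=h^a\circ\Phi^{t/a}$. A set $\mathcal{Y}\subset\mathcal{X}$ is a representative set if for every $x$ there is a unique $a=A(x)>0$ with $h^a(x)\in\mathcal{Y}$, with $A:\mathcal{X}\to(0,\infty)$ measurable and $\int A\,d\mu<\infty$; the projector is $P(x)=h^{A(x)}(x)$. For a measure $\rho$ and positive measurable $B$ with $0<\int B\,d\rho<\infty$, $\rho_B$ is the probability measure with $d\rho_B/d\rho=B/\int B\,d\rho$. *)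

theory Defs
  imports "HOL-Probability.Probability"
begin

text \<open>The normalized measure rho_B: density B / (integral of B w.r.t. rho).
  It is only meaningful when B is positive and measurable with
  0 < integral B < infinity.\<close>
definition normalized_density :: "'a measure \<Rightarrow> ('a \<Rightarrow> real) \<Rightarrow> 'a measure" where
  "normalized_density \<rho> B = density \<rho> (\<lambda>x. ennreal (B x / integral\<^sup>L \<rho> B))"

end

theory Submission
  imports Defs
begin

text \<open>
  The scaling \<open>h\<^sup>a\<close> intertwines the flow at time \<open>t\<close> with the flow at time \<open>t / a\<close>,
  so it carries the invariant measure \<open>\<mu>\<close> to an invariant measure. Uniqueness of the
  representative gives \<open>A \<circ> h\<^sup>a = A / a\<close> and hence \<open>P \<circ> h\<^sup>a = P\<close>. Pulling the density
  of \<open>(h\<^sup>a\<^sub>\<sharp>\<mu>)\<^sub>A\<close> back along \<open>h\<^sup>a\<close> therefore yields \<open>A / a\<close>, which normalizes to the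
  density of \<open>\<mu>\<^sub>A\<close>, and \<open>P\<close> does not see the remaining push-forward by \<open>h\<^sup>a\<close>.
\<close>

lemma distr_invariant_if_semiconjugate:
  assumes g: "g \<in> M \<rightarrow>\<^sub>M N" and f: "f \<in> N \<rightarrow>\<^sub>M N" and f': "f' \<in> M \<rightarrow>\<^sub>M M"
    and semiconj: "\<And>x. x \<in> space M \<Longrightarrow> f (g x) = g (f' x)"
    and invariant: "distr M M f' = M"
  shows "distr (distr M N g) N f = distr M N g"
proof -
  have "distr (distr M N g) N f = distr M N (f \<circ> g)"
    using distr_distr[OF f g] .
  also have "\<dots> = distr M N (g \<circ> f')"
    by (rule distr_cong) (simp_all add: semiconj)
  also have "\<dots> = distr (distr M M f') N g"
    using distr_distr[OF g f'] by simp
  finally show ?thesis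
    by (simp add: invariant)
qed

lemma sets_normalized_density [simp, measurable_cong]:
  "sets (normalized_density M B) = sets M"
  by (simp add: normalized_density_def)

lemma space_normalized_density [simp]:
  "space (normalized_density M B) = space M"
  by (simp add: normalized_density_def)

lemma normalized_density_distr:
  assumes g: "g \<in> M \<rightarrow>\<^sub>M N" and B: "B \<in> borel_measurable N"
  shows "normalized_density (distr M N g) B = distr (normalized_density M (\<lambda>x. B (g x))) N g"
proof -
  have "(\<lambda>y. ennreal (B y / integral\<^sup>L M (\<lambda>x. B (g x)))) \<in> borel_measurable N"
    using B by measurable
  then show ?thesis
    unfolding normalized_density_def integral_distr[OF g B] by (rule density_distr[OF _ g])
qed

lemma normalized_density_cong:
  assumes "\<And>x. x \<in> space M \<Longrightarrow> B x = B' x"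
  shows "normalized_density M B = normalized_density M B'"
proof -
  have "integral\<^sup>L M B = integral\<^sup>L M B'"
    by (rule Bochner_Integration.integral_cong) (simp_all add: assms)
  then show ?thesis
    unfolding normalized_density_def density_def
    by (intro arg_cong[where f = "measure_of (space M) (sets M)"] ext nn_integral_cong)
      (simp add: assms)
qed

lemma normalized_density_divide:
  assumes "c \<noteq> 0"
  shows "normalized_density M (\<lambda>x. B x / c) = normalized_density M B"
  using assms by (simp add: normalized_density_def)

locale representative_set =
  fixes S :: "'a set" and h :: "real \<Rightarrow> 'a \<Rightarrow> 'a" and Y :: "'a set" and A :: "'a \<Rightarrow> real"
  assumes h_closed: "\<And>b x. b > 0 \<Longrightarrow> x \<in> S \<Longrightarrow> h b x \<in> S"
    and h_mult: "\<And>b1 b2 x. b1 > 0 \<Longrightarrow> b2 > 0 \<Longrightarrow> x \<in> S \<Longrightarrow> h b1 (h b2 x) = h (b1 * b2) x"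
    and A_pos: "\<And>x. x \<in> S \<Longrightarrow> A x > 0"
    and A_rep: "\<And>x. x \<in> S \<Longrightarrow> h (A x) x \<in> Y"
    and A_unique: "\<And>x b. x \<in> S \<Longrightarrow> b > 0 \<Longrightarrow> h b x \<in> Y \<Longrightarrow> b = A x"
begin

lemma A_scale:
  assumes a: "a > 0" and x: "x \<in> S"
  shows "A (h a x) = A x / a"
proof -
  have hx: "h a x \<in> S"
    using h_closed a x .
  have "h (A (h a x) * a) x = h (A (h a x)) (h a x)"
    using h_mult A_pos hx x a by simp
  also have "\<dots> \<in> Y"
    using A_rep hx .
  finally have "A (h a x) * a = A x"
    using A_unique A_pos hx x a by simp
  with a show ?thesis
    by (simp add: field_simps)
qed

lemma projector_scale_invariant:
  assumes a: "a > 0" and x: "x \<in> S"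
  shows "h (A (h a x)) (h a x) = h (A x) x"
  using h_mult[of "A x / a" a x] A_pos[OF x] A_scale[OF a x] a x by simp

end

theorem proposition2:
  fixes M :: "'a measure"
    and \<Phi> :: "real \<Rightarrow> 'a \<Rightarrow> 'a"
    and h :: "real \<Rightarrow> 'a \<Rightarrow> 'a"
    and Y :: "'a set"
    and A :: "'a \<Rightarrow> real"
    and a :: real
  assumes prob: "prob_space M"
    and flow_bij: "\<And>t. bij_betw (\<Phi> t) (space M) (space M)"
    and flow_meas: "\<And>t. \<Phi> t \<in> M \<rightarrow>\<^sub>M M"
    and flow_group: "\<And>t1 t2 x. x \<in> space M \<Longrightarrow> \<Phi> t1 (\<Phi> t2 x) = \<Phi> (t1 + t2) x"
    and flow_joint: "(\<lambda>(x, t). \<Phi> t x) \<in> M \<Otimes>\<^sub>M borel \<rightarrow>\<^sub>M M"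
    and flow_inv: "\<And>t. distr M M (\<Phi> t) = M"
    and h_bij: "\<And>b. b > 0 \<Longrightarrow> bij_betw (h b) (space M) (space M)"
    and h_meas: "\<And>b. b > 0 \<Longrightarrow> h b \<in> M \<rightarrow>\<^sub>M M"
    and h_group: "\<And>b1 b2 x. b1 > 0 \<Longrightarrow> b2 > 0 \<Longrightarrow> x \<in> space M \<Longrightarrow>
                    h b1 (h b2 x) = h (b1 * b2) x"
    and h_flow: "\<And>t b x. b > 0 \<Longrightarrow> x \<in> space M \<Longrightarrow> \<Phi> t (h b x) = h b (\<Phi> (t / b) x)"
    and Y_sub: "Y \<subseteq> space M"
    and A_pos: "\<And>x. x \<in> space M \<Longrightarrow> A x > 0"
    and A_rep: "\<And>x. x \<in> space M \<Longrightarrow> h (A x) x \<in> Y"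
    and A_unique: "\<And>x b. x \<in> space M \<Longrightarrow> b > 0 \<Longrightarrow> h b x \<in> Y \<Longrightarrow> b = A x"
    and A_meas: "A \<in> borel_measurable M"
    and A_int: "integrable M A"
    and P_meas: "(\<lambda>x. h (A x) x) \<in> M \<rightarrow>\<^sub>M M"
    and a_pos: "a > 0"
  shows "(\<forall>t. distr (distr M M (h a)) M (\<Phi> t) = distr M M (h a))
         \<and> integrable (distr M M (h a)) A
         \<and> distr (normalized_density (distr M M (h a)) A) M (\<lambda>x. h (A x) x)
           = distr (normalized_density M A) M (\<lambda>x. h (A x) x)"
proof -
  interpret representative_set "space M" h Y A
  proof
    show "h b x \<in> space M" if "b > 0" and "x \<in> space M" for b x
      using measurable_space[OF h_meas] that .
  qed (fact h_group A_pos A_rep A_unique)+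
  have ha: "h a \<in> M \<rightarrow>\<^sub>M M"
    using h_meas a_pos .
  have "distr (distr M M (h a)) M (\<Phi> t) = distr M M (h a)" for t
    using ha flow_meas flow_meas h_flow[OF a_pos] flow_inv
    by (rule distr_invariant_if_semiconjugate)
  moreover have "integrable (distr M M (h a)) A"
  proof -
    have "integrable M (\<lambda>x. A (h a x)) \<longleftrightarrow> integrable M (\<lambda>x. A x / a)"
      by (rule Bochner_Integration.integrable_cong) (simp_all add: A_scale[OF a_pos])
    then show ?thesis
      using integrable_distr_eq[OF ha A_meas] A_int by simp
  qed
  moreover have "distr (normalized_density (distr M M (h a)) A) M (\<lambda>x. h (A x) x)
      = distr (normalized_density M (\<lambda>x. A (h a x))) M (\<lambda>x. h (A (h a x)) (h a x))"
    unfolding normalized_density_distr[OF ha A_meas]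
    by (simp add: distr_distr[OF P_meas] measurable_cong_sets[OF sets_normalized_density refl] ha
        comp_def)
  moreover have "\<dots> = distr (normalized_density M (\<lambda>x. A x / a)) M (\<lambda>x. h (A x) x)"
    by (intro distr_cong normalized_density_cong) (auto intro: A_scale projector_scale_invariant a_pos)
  moreover have "a \<noteq> 0"
    using a_pos by simp
  ultimately show ?thesis
    by (simp add: normalized_density_divide)
qed

end
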